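(* Let $\bm X=(X_k:k\in V)$ have standard exponential margins and follow a tree geometric extremal graphical model with gauge $$g(\bm x)=\sum_{\{i,j\}\in E}\big(g_{\{i,j\}}(x_i,x_j)-x_i-x_j\big)+\sum_{k\in V}x_k,$$ where for each edge $g_{\{i,j\}}(x_i,x_j)=\frac{x_i}{\theta_{ij}}+\frac{x_j}{\gamma_{ij}}+\Big(1-\frac{1}{\theta_{ij}}-\frac{1}{\gamma_{ij}}\Big)\min(x_i,x_j)$ with $\theta_{ij},\gamma_{ij}\in(0,1)$. For $k<l$ in $V$, let $\mathrm{pa}(k,l)$ be the set of edges along the shortest path from $k$ to $l$, each written as an ordered pair $(i,j)$ with $i$ the endpoint nearer to $k$. Then $$g_{\{k,l\}}(x_k,x_l)=\frac{x_k}{\max_{(i,j)\in\mathrm{pa}(k,l)}\theta_{ij}}+\frac{x_l}{\max_{(i,j)\in\mathrm{pa}(k,l)}\gamma_{ij}}+\Big(1-\frac{1}{\max_{(i,j)\in\mathrm{pa}(k,l)}\theta_{ij}}-\frac{1}{\max_{(i,j)\in\mathrm{pa}(k,l)}\gamma_{ij}}\Big)\min(x_k,x_l).$$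
   Context: A tree is a connected acyclic graph $(V,E)$. $g_{\{k,l\}}(x_k,x_l)=\min_{x_s\ge0,\,s\notin\{k,l\}}g(\bm x)$ is the bivariate marginal gauge. The parameterization of an edge's gauge depends on orientation: writing the edge as $(j,i)$ instead of $(i,j)$ corresponds to $\theta_{ji}=\gamma_{ij}$ and $\gamma_{ji}=\theta_{ij}$. *)

theory Defs
  imports Complex_Main
begin

text \<open>Undirected graph on vertex set V, each edge stored once as an ordered pair (i,j);
  the parameters theta, gamma of an edge refer to this stored orientation.\<close>

definition adj :: "('v \<times> 'v) set \<Rightarrow> 'v \<Rightarrow> 'v \<Rightarrow> bool" where
  "adj E i j \<longleftrightarrow> (i, j) \<in> E \<or> (j, i) \<in> E"

definition walk :: "('v \<times> 'v) set \<Rightarrow> 'v list \<Rightarrow> 'v \<Rightarrow> 'v \<Rightarrow> bool" where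
  "walk E ps u v \<longleftrightarrow> ps \<noteq> [] \<and> hd ps = u \<and> last ps = v \<and>
     (\<forall>n. Suc n < length ps \<longrightarrow> adj E (ps ! n) (ps ! Suc n))"

definition simple_path :: "('v \<times> 'v) set \<Rightarrow> 'v list \<Rightarrow> 'v \<Rightarrow> 'v \<Rightarrow> bool" where
  "simple_path E ps u v \<longleftrightarrow> walk E ps u v \<and> distinct ps"

definition is_graph :: "'v set \<Rightarrow> ('v \<times> 'v) set \<Rightarrow> bool" where
  "is_graph V E \<longleftrightarrow> finite V \<and> E \<subseteq> V \<times> V \<and> (\<forall>i. (i, i) \<notin> E)
     \<and> (\<forall>i j. (i, j) \<in> E \<longrightarrow> (j, i) \<notin> E)"

definition connected_graph :: "'v set \<Rightarrow> ('v \<times> 'v) set \<Rightarrow> bool" where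
  "connected_graph V E \<longleftrightarrow> (\<forall>u\<in>V. \<forall>v\<in>V. \<exists>ps. walk E ps u v)"

definition acyclic_graph :: "('v \<times> 'v) set \<Rightarrow> bool" where
  "acyclic_graph E \<longleftrightarrow> \<not> (\<exists>ps. length ps \<ge> 3 \<and> distinct ps \<and>
      (\<forall>n. Suc n < length ps \<longrightarrow> adj E (ps ! n) (ps ! Suc n)) \<and> adj E (last ps) (hd ps))"

definition is_tree :: "'v set \<Rightarrow> ('v \<times> 'v) set \<Rightarrow> bool" where
  "is_tree V E \<longleftrightarrow> V \<noteq> {} \<and> is_graph V E \<and> connected_graph V E \<and> acyclic_graph E"

definition edge_gauge :: "real \<Rightarrow> real \<Rightarrow> real \<Rightarrow> real \<Rightarrow> real" where
  "edge_gauge th ga a b = a / th + b / ga + (1 - 1 / th - 1 / ga) * min a b"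

definition tree_gauge :: "'v set \<Rightarrow> ('v \<times> 'v) set \<Rightarrow> ('v \<times> 'v \<Rightarrow> real) \<Rightarrow> ('v \<times> 'v \<Rightarrow> real)
    \<Rightarrow> ('v \<Rightarrow> real) \<Rightarrow> real" where
  "tree_gauge V E \<theta> \<gamma> x =
     (\<Sum>(i, j)\<in>E. edge_gauge (\<theta> (i, j)) (\<gamma> (i, j)) (x i) (x j) - x i - x j) + (\<Sum>k\<in>V. x k)"

definition marginal2 :: "'v set \<Rightarrow> (('v \<Rightarrow> real) \<Rightarrow> real) \<Rightarrow> 'v \<Rightarrow> 'v \<Rightarrow> real \<Rightarrow> real \<Rightarrow> real" where
  "marginal2 V g k l a b =
     Inf {g x | x. (\<forall>s\<in>V. 0 \<le> x s) \<and> x k = a \<and> x l = b}"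

text \<open>Oriented parameters: traversing stored edge (j,i) as (i,j) gives theta_ij = gamma_ji.\<close>
definition theta_or :: "('v \<times> 'v) set \<Rightarrow> ('v \<times> 'v \<Rightarrow> real) \<Rightarrow> ('v \<times> 'v \<Rightarrow> real) \<Rightarrow> 'v \<Rightarrow> 'v \<Rightarrow> real" where
  "theta_or E \<theta> \<gamma> i j = (if (i, j) \<in> E then \<theta> (i, j) else \<gamma> (j, i))"

definition gamma_or :: "('v \<times> 'v) set \<Rightarrow> ('v \<times> 'v \<Rightarrow> real) \<Rightarrow> ('v \<times> 'v \<Rightarrow> real) \<Rightarrow> 'v \<Rightarrow> 'v \<Rightarrow> real" where
  "gamma_or E \<theta> \<gamma> i j = (if (i, j) \<in> E then \<gamma> (i, j) else \<theta> (j, i))"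

end

theory Submission
  imports Defs
begin

text \<open>Each edge gauge equals \<open>x\<^sub>i + x\<^sub>j - min x\<^sub>i x\<^sub>j\<close> plus the penalty
  \<open>(1/\<theta> - 1)(x\<^sub>i - x\<^sub>j)\<^sup>+ + (1/\<gamma> - 1)(x\<^sub>j - x\<^sub>i)\<^sup>+\<close>, so the tree gauge is
  \<open>\<Sum>\<^sub>V x - \<Sum>\<^sub>E min\<close> plus the sum of the edge penalties. Removing leaves one at a time shows
  that \<open>\<Sum>\<^sub>V x - \<Sum>\<^sub>E min\<close> is at least \<open>x\<^sub>l\<close> plus the total descent of \<open>x\<close> along the
  path from \<open>k\<close> to \<open>l\<close>, with equality when \<open>x\<close> is constant across the edges off the path.
  Dropping the penalties of the other edges and using that \<open>d \<mapsto> d\<^sup>+/T + (1/G - 1) d\<^sup>-\<close> is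
  subadditive and dominated by the cost of every path edge gives the lower bound
  \<open>x\<^sub>l + (x\<^sub>k - x\<^sub>l)\<^sup>+/T + (1/G - 1)(x\<^sub>k - x\<^sub>l)\<^sup>-\<close>, which is the claimed formula.
  It is attained by cutting the tree at a path edge with maximal \<open>\<theta>\<close> (if \<open>a \<ge> b\<close>) or
  maximal \<open>\<gamma>\<close> (if \<open>a < b\<close>) and putting \<open>x = a\<close> on the side of \<open>k\<close>, \<open>x = b\<close> on the other.\<close>

section \<open>Walks in acyclic graphs\<close>

lemma adj_sym: "adj E a b \<longleftrightarrow> adj E b a"
  unfolding adj_def by auto

lemma adj_mono: "E' \<subseteq> E \<Longrightarrow> adj E' a b \<Longrightarrow> adj E a b"
  unfolding adj_def by auto

lemma walk_iff_successively:
  "walk E ps u v \<longleftrightarrow> ps \<noteq> [] \<and> hd ps = u \<and> last ps = v \<and> successively (adj E) ps"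
  unfolding walk_def successively_conv_nth by auto

lemma acyclic_graph_iff_successively:
  "acyclic_graph E \<longleftrightarrow> \<not> (\<exists>ps. length ps \<ge> 3 \<and> distinct ps \<and>
      successively (adj E) ps \<and> adj E (last ps) (hd ps))"
  unfolding acyclic_graph_def successively_conv_nth by auto

lemma walk_subset_vertices:
  assumes "E \<subseteq> V \<times> V" "u \<in> V" "walk E ps u w"
  shows "set ps \<subseteq> V"
proof
  fix y assume "y \<in> set ps"
  then obtain i where i: "i < length ps" "ps ! i = y"
    by (auto simp: in_set_conv_nth)
  show "y \<in> V"
  proof (cases i)
    case 0
    then show ?thesis
      using assms(2,3) i unfolding walk_def by (metis hd_conv_nth)
  next
    case (Suc n)
    then have "adj E (ps ! n) y"
      using assms(3) i unfolding walk_def by auto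
    then show ?thesis
      using assms(1) unfolding adj_def by auto
  qed
qed

lemma walk_imp_distinct_walk:
  "walk E ps u v \<Longrightarrow> \<exists>qs. walk E qs u v \<and> distinct qs"
proof (induction "length ps" arbitrary: ps rule: less_induct)
  case less
  show ?case
  proof (cases "distinct ps")
    case False
    then obtain xs ys zs y where ps: "ps = xs @ [y] @ ys @ [y] @ zs"
      using not_distinct_decomp by blast
    have "successively (adj E) (xs @ (y # ys) @ (y # zs))"
      using less.prems unfolding walk_iff_successively ps by simp
    then have "successively (adj E) (xs @ y # zs)"
      unfolding successively_append_iff by auto
    moreover have "hd (xs @ y # zs) = u" "last (xs @ y # zs) = v"
      using less.prems unfolding walk_iff_successively ps by (auto simp: hd_append)
    ultimately have "walk E (xs @ y # zs) u v"
      unfolding walk_iff_successively by simp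
    moreover have "length (xs @ y # zs) < length ps"
      using ps by simp
    ultimately show ?thesis
      using less.hyps by blast
  qed (use less.prems in blast)
qed

definition adj_rel :: "('v \<times> 'v) set \<Rightarrow> ('v \<times> 'v) set" where
  "adj_rel E = {(p, q). adj E p q}"

lemma walk_if_adj_rel_rtrancl:
  assumes "(p, q) \<in> (adj_rel E)\<^sup>*"
  shows "\<exists>ws. walk E ws p q"
  using assms
proof (induction rule: rtrancl_induct)
  case base
  show ?case
    by (rule exI[of _ "[p]"]) (simp add: walk_iff_successively)
next
  case (step y z)
  then obtain ws where "walk E ws p y" by blast
  with step.hyps(2) have "walk E (ws @ [z]) p z"
    unfolding walk_iff_successively successively_append_iff adj_rel_def by auto
  then show ?case by blast
qed

lemma adj_rel_rtrancl_if_successively: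
  assumes "successively (adj E) xs" "x \<in> set xs" "y \<in> set xs"
  shows "(x, y) \<in> (adj_rel E)\<^sup>*"
  using assms
proof (induction "adj E" xs arbitrary: x y rule: successively.induct)
  case (3 a b xs)
  let ?R = "adj_rel E"
  have "(a, b) \<in> ?R" "(b, a) \<in> ?R"
    using "3.prems"(1) adj_sym[of E a b] by (auto simp: adj_rel_def)
  moreover have reach: "(u, w) \<in> ?R\<^sup>*" if "u \<in> set (b # xs)" "w \<in> set (b # xs)" for u w
    using "3.hyps" "3.prems"(1) that by simp
  ultimately have "(a, w) \<in> ?R\<^sup>* \<and> (w, a) \<in> ?R\<^sup>*" if "w \<in> set (b # xs)" for w
    using reach[OF _ that] reach[OF that] by (meson converse_rtrancl_into_rtrancl list.set_intros(1) rtrancl_into_rtrancl)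
  then show ?case
    using "3.prems"(2,3) reach by (metis rtrancl.rtrancl_refl set_ConsD)
qed auto

definition path_in :: "'v set \<Rightarrow> ('v \<times> 'v) set \<Rightarrow> 'v list \<Rightarrow> bool" where
  "path_in V E ps \<longleftrightarrow> ps \<noteq> [] \<and> distinct ps \<and> set ps \<subseteq> V \<and> successively (adj E) ps"

lemma path_in_rev [simp]: "path_in V E (rev ps) \<longleftrightarrow> path_in V E ps"
  unfolding path_in_def by (simp add: adj_sym[of E])

lemma path_in_Cons_Cons: "path_in V E (a # b # r) \<Longrightarrow> path_in V E (b # r) \<and> a \<notin> set (b # r)"
  unfolding path_in_def by simp

lemma path_in_singleton: "path_in {w} E ps \<Longrightarrow> ps = [w]"
  unfolding path_in_def by (cases ps rule: remdups_adj.cases) auto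

text \<open>A longest path ends in a vertex of degree at most one; the acyclicity forbids
  a second neighbour earlier on the path.\<close>
lemma acyclic_graph_has_leaf:
  assumes fin: "finite V" and ne: "V \<noteq> {}" and EV: "E \<subseteq> V \<times> V"
    and irr: "\<forall>i. (i, i) \<notin> E" and acyc: "acyclic_graph E"
  shows "\<exists>v\<in>V. \<forall>u u'. adj E v u \<longrightarrow> adj E v u' \<longrightarrow> u = u'"
proof -
  define S where "S = {ps. path_in V E ps}"
  have finS: "finite S"
    by (rule finite_subset[OF _ finite_subset_distinct[OF fin]]) (auto simp: S_def path_in_def)
  obtain v0 where "v0 \<in> V" using ne by blast
  then have "[v0] \<in> S" by (simp add: S_def path_in_def)
  then have "length ` S \<noteq> {}" by blast
  then obtain ps where ps_S: "ps \<in> S" and "length ps = Max (length ` S)"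
    using Max_in[OF finite_imageI[OF finS]] by (metis imageE)
  then have longest: "length qs \<le> length ps" if "qs \<in> S" for qs
    using Max_ge[OF finite_imageI[OF finS]] that by auto
  have ps: "ps \<noteq> []" "distinct ps" "set ps \<subseteq> V" "successively (adj E) ps"
    using ps_S by (auto simp: S_def path_in_def)
  define w where "w = last ps"
  have "w \<in> V" using ps unfolding w_def by auto
  have neighbour: "u = ps ! (length ps - 2)" if "adj E w u" for u
  proof -
    have "u \<in> set ps"
    proof (rule ccontr)
      assume "u \<notin> set ps"
      moreover have "u \<in> V" using that EV unfolding adj_def by auto
      moreover have "successively (adj E) (ps @ [u])"
        using ps that unfolding successively_append_iff w_def by auto
      ultimately have "ps @ [u] \<in> S" using ps by (auto simp: S_def path_in_def)
      from longest[OF this] show False by simp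
    qed
    then obtain i where i: "i < length ps" "ps ! i = u" by (auto simp: in_set_conv_nth)
    have "u \<noteq> w" using that irr unfolding adj_def by auto
    then have "i \<noteq> length ps - 1"
      using i ps(1) unfolding w_def by (auto simp: last_conv_nth)
    moreover have "\<not> i < length ps - 2"
    proof
      assume "i < length ps - 2"
      then have "length (drop i ps) \<ge> 3" "distinct (drop i ps)"
        "successively (adj E) (drop i ps)" "adj E (last (drop i ps)) (hd (drop i ps))"
        using ps i that successively_append_iff[of _ "take i ps" "drop i ps"]
        by (auto simp: w_def hd_drop_conv_nth)
      then show False using acyc unfolding acyclic_graph_iff_successively by blast
    qed
    ultimately have "i = length ps - 2"
      using i(1) by linarith
    then show ?thesis
      using i(2) by simp
  qed
  show ?thesis
    using \<open>w \<in> V\<close> neighbour by metis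
qed

lemma distinct_path_edge_eq_imp_eq:
  assumes "distinct ps" "Suc n < length ps" "Suc m < length ps"
    and "{ps ! n, ps ! Suc n} = {ps ! m, ps ! Suc m}"
  shows "n = m"
  using assms by (auto simp: doubleton_eq_iff nth_eq_iff_index_eq)

lemma acyclic_graph_edge_is_bridge:
  assumes acyc: "acyclic_graph E" and "adj E c1 c2" "c1 \<noteq> c2"
  shows "(c1, c2) \<notin> (adj_rel (E - {(c1, c2), (c2, c1)}))\<^sup>*"
proof
  let ?F = "E - {(c1, c2), (c2, c1)}"
  assume "(c1, c2) \<in> (adj_rel ?F)\<^sup>*"
  then have "\<exists>ws. walk ?F ws c1 c2"
    by (rule walk_if_adj_rel_rtrancl)
  then obtain ws where "walk ?F ws c1 c2"
    by blast
  then obtain qs where qs: "walk ?F qs c1 c2" "distinct qs"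
    by (metis walk_imp_distinct_walk)
  then have qs': "qs \<noteq> []" "hd qs = c1" "last qs = c2" "successively (adj ?F) qs"
    unfolding walk_iff_successively by auto
  show False
  proof (cases "length qs \<ge> 3")
    case True
    have "successively (adj E) qs"
      using qs'(4) by (rule successively_mono) (auto intro: adj_mono[of ?F E])
    moreover have "adj E (last qs) (hd qs)"
      using qs' assms(2) adj_sym by metis
    ultimately show False
      using acyc True qs(2) unfolding acyclic_graph_iff_successively by blast
  next
    case False
    have "length qs \<noteq> 1"
      using qs' \<open>c1 \<noteq> c2\<close> by (auto simp: length_Suc_conv)
    moreover have "length qs \<noteq> 0"
      using qs'(1) by simp
    ultimately have "length qs = 2"
      using False by linarith
    then have "hd qs = qs ! 0" "last qs = qs ! Suc 0"
      using hd_conv_nth[OF qs'(1)] last_conv_nth[OF qs'(1)] by simp_all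
    then have "adj ?F c1 c2"
      using successively_nth[OF qs'(4), of 0] qs'(2,3) \<open>length qs = 2\<close> by simp
    then show False
      unfolding adj_def by auto
  qed
qed

lemma path_edge_cut:
  assumes acyc: "acyclic_graph E" and ps: "distinct ps" "successively (adj E) ps"
    and m: "Suc m < length ps"
  obtains A where "\<And>n. n \<le> m \<Longrightarrow> ps ! n \<in> A"
    and "\<And>n. m < n \<Longrightarrow> n < length ps \<Longrightarrow> ps ! n \<notin> A"
    and "\<And>i j. (i, j) \<in> E \<Longrightarrow> {i, j} \<noteq> {ps ! m, ps ! Suc m} \<Longrightarrow> i \<in> A \<longleftrightarrow> j \<in> A"
proof -
  define c1 where "c1 = ps ! m"
  define c2 where "c2 = ps ! Suc m"
  let ?F = "E - {(c1, c2), (c2, c1)}"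
  have off_cut: "adj ?F (ps ! n) (ps ! Suc n)" if "Suc n < length ps" "n \<noteq> m" for n
  proof -
    have "{ps ! n, ps ! Suc n} \<noteq> {c1, c2}"
      using distinct_path_edge_eq_imp_eq[OF ps(1) that(1) m] that(2) unfolding c1_def c2_def by blast
    then show ?thesis
      using successively_nth[OF ps(2) that(1)] unfolding adj_def by auto
  qed
  have "successively (adj ?F) (take (Suc m) ps)"
    unfolding successively_conv_nth using off_cut m by auto
  moreover have "ps ! n \<in> set (take (Suc m) ps)" if "n \<le> m" for n
    using that m by (auto simp: in_set_conv_nth intro!: exI[of _ n])
  ultimately have reach_c1: "(c1, ps ! n) \<in> (adj_rel ?F)\<^sup>*" if "n \<le> m" for n
    using that unfolding c1_def by (blast intro: adj_rel_rtrancl_if_successively)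
  have "successively (adj ?F) (drop (Suc m) ps)"
    unfolding successively_conv_nth using off_cut by auto
  moreover have "ps ! n \<in> set (drop (Suc m) ps)" if "m < n" "n < length ps" for n
    using that by (auto simp: in_set_conv_nth intro!: exI[of _ "n - Suc m"])
  ultimately have reach_c2: "(ps ! n, c2) \<in> (adj_rel ?F)\<^sup>*" if "m < n" "n < length ps" for n
    using that m unfolding c2_def by (blast intro: adj_rel_rtrancl_if_successively)
  have "c1 \<noteq> c2"
    using ps(1) m unfolding c1_def c2_def by (simp add: nth_eq_iff_index_eq)
  then have bridge: "(c1, c2) \<notin> (adj_rel ?F)\<^sup>*"
    using acyclic_graph_edge_is_bridge[OF acyc successively_nth[OF ps(2) m]] unfolding c1_def c2_def by blast
  define A where "A = {w. (c1, w) \<in> (adj_rel ?F)\<^sup>*}"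
  show ?thesis
  proof (rule that[of A])
    show "ps ! n \<in> A" if "n \<le> m" for n
      using reach_c1[OF that] unfolding A_def by simp
    show "ps ! n \<notin> A" if "m < n" "n < length ps" for n
      using reach_c2[OF that] bridge unfolding A_def by (meson mem_Collect_eq rtrancl_trans)
    show "i \<in> A \<longleftrightarrow> j \<in> A" if "(i, j) \<in> E" "{i, j} \<noteq> {ps ! m, ps ! Suc m}" for i j
    proof -
      have "(i, j) \<in> ?F"
        using that unfolding c1_def c2_def by blast
      then have "(i, j) \<in> adj_rel ?F" "(j, i) \<in> adj_rel ?F"
        unfolding adj_rel_def adj_def by auto
      then show ?thesis
        unfolding A_def by (auto intro: rtrancl_into_rtrancl)
    qed
  qed
qed

section \<open>Induction over pendant vertices\<close>

definition pendant :: "('v \<times> 'v) set \<Rightarrow> 'v \<Rightarrow> 'v \<Rightarrow> bool" where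
  "pendant E v u \<longleftrightarrow> adj E v u \<and> (\<forall>w. adj E v w \<longrightarrow> w = u)"

definition remove_vertex_edges :: "'v \<Rightarrow> ('v \<times> 'v) set \<Rightarrow> ('v \<times> 'v) set" where
  "remove_vertex_edges v E = {e \<in> E. fst e \<noteq> v \<and> snd e \<noteq> v}"

lemma adj_remove_vertex_edges_iff:
  "adj (remove_vertex_edges v E) a b \<longleftrightarrow> adj E a b \<and> a \<noteq> v \<and> b \<noteq> v"
  unfolding adj_def remove_vertex_edges_def by auto

lemma successively_adj_remove_vertex_edges:
  "successively (adj E) ps \<Longrightarrow> v \<notin> set ps \<Longrightarrow> successively (adj (remove_vertex_edges v E)) ps"
  by (induction "adj E" ps rule: successively.induct) (auto simp: adj_remove_vertex_edges_iff)

lemma pendant_in_distinct_path_is_end: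
  assumes "distinct ps" "successively (adj E) ps" "v \<in> set ps"
    and "pendant E v u"
  shows "v = hd ps \<or> v = last ps"
proof (rule ccontr)
  assume inner: "\<not> (v = hd ps \<or> v = last ps)"
  obtain i where i: "i < length ps" "ps ! i = v"
    using assms(3) by (auto simp: in_set_conv_nth)
  have "ps \<noteq> []"
    using i by auto
  then have "i \<noteq> 0" "i \<noteq> length ps - 1"
    using inner i hd_conv_nth last_conv_nth by metis+
  then have "0 < i" "Suc i < length ps"
    using i(1) by auto
  then have "adj E v (ps ! (i - 1))" "adj E v (ps ! Suc i)"
    using successively_nth[OF assms(2), of "i - 1"] successively_nth[OF assms(2), of i] i
    by (auto simp: adj_sym[of E v])
  then have "ps ! (i - 1) = ps ! Suc i"
    using \<open>pendant E v u\<close> unfolding pendant_def by metis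
  with \<open>0 < i\<close> \<open>Suc i < length ps\<close> show False
    using assms(1) by (simp add: nth_eq_iff_index_eq)
qed

lemma connected_graph_has_neighbour:
  assumes "connected_graph V E" "v \<in> V" "w \<in> V" "v \<noteq> w"
  shows "\<exists>u. adj E v u"
proof -
  obtain ps where ps: "walk E ps v w"
    using assms unfolding connected_graph_def by blast
  then have "Suc 0 < length ps"
    using assms(4) unfolding walk_def by (cases ps) auto
  then show ?thesis
    using ps unfolding walk_def by (metis hd_conv_nth list.size(3) not_less_zero)
qed

lemma path_in_remove_pendant:
  "path_in V E ps \<Longrightarrow> v \<notin> set ps \<Longrightarrow> path_in (V - {v}) (remove_vertex_edges v E) ps"
  unfolding path_in_def by (auto intro: successively_adj_remove_vertex_edges)

lemma pendant_neighbour_mem: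
  assumes "is_tree V E" "pendant E v u"
  shows "u \<in> V - {v}"
  using assms unfolding is_tree_def is_graph_def pendant_def adj_def by auto

lemma is_tree_remove_pendant:
  assumes tree: "is_tree V E" and "pendant E v u"
  shows "is_tree (V - {v}) (remove_vertex_edges v E)"
proof -
  let ?E' = "remove_vertex_edges v E"
  have sub: "?E' \<subseteq> E"
    unfolding remove_vertex_edges_def by auto
  have "u \<in> V - {v}"
    using pendant_neighbour_mem[OF assms] .
  moreover have "is_graph (V - {v}) ?E'"
    using tree unfolding is_tree_def is_graph_def remove_vertex_edges_def by auto
  moreover have "acyclic_graph ?E'"
    using tree adj_mono[OF sub] successively_mono[of "adj ?E'" _ "adj E"]
    unfolding is_tree_def acyclic_graph_iff_successively by meson
  moreover have "connected_graph (V - {v}) ?E'"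
    unfolding connected_graph_def
  proof (intro ballI)
    fix p q assume pq: "p \<in> V - {v}" "q \<in> V - {v}"
    then obtain ps where "walk E ps p q"
      using tree unfolding is_tree_def connected_graph_def by blast
    then obtain qs where qs: "walk E qs p q" "distinct qs"
      by (metis walk_imp_distinct_walk)
    have "v \<notin> set qs"
    proof
      assume "v \<in> set qs"
      then have "v = hd qs \<or> v = last qs"
        using pendant_in_distinct_path_is_end[OF qs(2) _ _ \<open>pendant E v u\<close>] qs(1)
        unfolding walk_iff_successively by blast
      then show False
        using qs(1) pq unfolding walk_iff_successively by auto
    qed
    then have "walk ?E' qs p q"
      using qs(1) successively_adj_remove_vertex_edges[of E qs v]
      unfolding walk_iff_successively by simp
    then show "\<exists>ps. walk ?E' ps p q" ..
  qed
  ultimately show ?thesis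
    unfolding is_tree_def by blast
qed

lemma tree_has_pendant:
  assumes tree: "is_tree V E" and "\<nexists>w. V = {w}"
  shows "\<exists>v\<in>V. \<exists>u. pendant E v u"
proof -
  have fin: "finite V" and "V \<noteq> {}" and EV: "E \<subseteq> V \<times> V" and irr: "\<forall>i. (i, i) \<notin> E"
    and conn: "connected_graph V E" and "acyclic_graph E"
    using tree unfolding is_tree_def is_graph_def by auto
  obtain v where v: "v \<in> V" and deg: "\<forall>u u'. adj E v u \<longrightarrow> adj E v u' \<longrightarrow> u = u'"
    using acyclic_graph_has_leaf[OF fin \<open>V \<noteq> {}\<close> EV irr \<open>acyclic_graph E\<close>] by blast
  obtain w where "w \<in> V" "w \<noteq> v"
    using assms(2) v by blast
  then obtain u where "adj E v u"
    using connected_graph_has_neighbour[OF conn v] by blast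
  with deg v show ?thesis
    unfolding pendant_def by blast
qed

lemma tree_pendant_induct [consumes 1, case_names singleton pendant]:
  assumes "is_tree V E"
    and singleton: "\<And>v. P {v} {}"
    and pendant: "\<And>V E v u. is_tree V E \<Longrightarrow> v \<in> V \<Longrightarrow> pendant E v u
      \<Longrightarrow> P (V - {v}) (remove_vertex_edges v E) \<Longrightarrow> P V E"
  shows "P V E"
  using assms(1)
proof (induction "card V" arbitrary: V E rule: less_induct)
  case less
  show ?case
  proof (cases "\<exists>w. V = {w}")
    case True
    then obtain w where "V = {w}" by blast
    moreover have "E = {}"
      using less.prems calculation unfolding is_tree_def is_graph_def by auto
    ultimately show ?thesis
      using singleton by simp
  next
    case False
    then obtain v u where v: "v \<in> V" and vu: "pendant E v u"
      using tree_has_pendant[OF less.prems] by blast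
    have "finite V"
      using less.prems unfolding is_tree_def is_graph_def by simp
    then have "card (V - {v}) < card V"
      using v by (rule card_Diff1_less)
    then have "P (V - {v}) (remove_vertex_edges v E)"
      using is_tree_remove_pendant[OF less.prems vu] by (rule less.hyps)
    then show ?thesis
      by (rule pendant[OF less.prems v vu])
  qed
qed

lemma pendant_path_cases [consumes 2, case_names avoid single head tail]:
  assumes ps: "path_in V E ps" and "pendant E v u"
  obtains (avoid) "v \<notin> set ps"
    | (single) "ps = [v]"
    | (head) r where "ps = v # u # r"
    | (tail) r where "rev ps = v # u # r"
proof -
  have starts_at_v: "qs = [v] \<or> (\<exists>r. qs = v # u # r)"
    if "qs \<noteq> []" "hd qs = v" "successively (adj E) qs" for qs
  proof (cases qs rule: remdups_adj.cases)
    case (3 a b r)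
    then show ?thesis
      using that \<open>pendant E v u\<close> unfolding pendant_def by simp
  qed (use that in auto)
  have "ps \<noteq> []" "distinct ps" "successively (adj E) ps" "successively (adj E) (rev ps)"
    using ps path_in_rev[of V E ps] unfolding path_in_def by auto
  show ?thesis
  proof (cases "v \<in> set ps")
    case True
    then have "hd ps = v \<or> hd (rev ps) = v"
      using pendant_in_distinct_path_is_end[OF \<open>distinct ps\<close> \<open>successively (adj E) ps\<close> _ \<open>pendant E v u\<close>]
        \<open>ps \<noteq> []\<close> by (auto simp: hd_rev)
    then consider "ps = [v]" | r where "ps = v # u # r" | "rev ps = [v]" | r where "rev ps = v # u # r"
      using starts_at_v[of ps] starts_at_v[of "rev ps"] \<open>ps \<noteq> []\<close> \<open>successively (adj E) ps\<close>
        \<open>successively (adj E) (rev ps)\<close> by auto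
    then show ?thesis
      using that by (metis rev_singleton_conv)
  qed (use that in blast)
qed

section \<open>Descent along a path\<close>

definition base_gauge :: "'v set \<Rightarrow> ('v \<times> 'v) set \<Rightarrow> ('v \<Rightarrow> real) \<Rightarrow> real" where
  "base_gauge V E x = (\<Sum>v\<in>V. x v) - (\<Sum>(i, j)\<in>E. min (x i) (x j))"

fun path_descent :: "('v \<Rightarrow> real) \<Rightarrow> 'v list \<Rightarrow> real" where
  "path_descent x [] = 0"
| "path_descent x [a] = x a"
| "path_descent x (a # b # r) = max (x a - x b) 0 + path_descent x (b # r)"

definition on_path :: "'v list \<Rightarrow> 'v \<Rightarrow> 'v \<Rightarrow> bool" where
  "on_path ps i j \<longleftrightarrow> (\<exists>n. Suc n < length ps \<and> {ps ! n, ps ! Suc n} = {i, j})"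

definition stored_edge :: "('v \<times> 'v) set \<Rightarrow> 'v \<Rightarrow> 'v \<Rightarrow> 'v \<times> 'v" where
  "stored_edge E i j = (if (i, j) \<in> E then (i, j) else (j, i))"

lemma stored_edge_in: "adj E i j \<Longrightarrow> stored_edge E i j \<in> E"
  unfolding stored_edge_def adj_def by auto

lemma stored_edge_eq:
  assumes "(i, j) \<in> E" "(j, i) \<notin> E" "{p, q} = {i, j}"
  shows "stored_edge E p q = (i, j)"
  using assms unfolding stored_edge_def by (auto simp: doubleton_eq_iff)

lemma path_descent_snoc:
  "ps \<noteq> [] \<Longrightarrow> path_descent x (ps @ [c]) = path_descent x ps - x (last ps) + max (x (last ps) - x c) 0 + x c"
  by (induction x ps rule: path_descent.induct) auto

lemma path_descent_rev: "path_descent x (rev ps) = path_descent x ps"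
proof (induction x ps rule: path_descent.induct)
  case (3 x a b r)
  then show ?case
    using path_descent_snoc[of "rev r @ [b]" x a] by (simp add: max_def)
qed auto

lemma path_descent_conv_sum:
  "ps \<noteq> [] \<Longrightarrow> path_descent x ps = x (last ps) + (\<Sum>n<length ps - 1. max (x (ps ! n) - x (ps ! Suc n)) 0)"
  by (induction x ps rule: path_descent.induct) (simp_all add: sum.lessThan_Suc_shift del: sum.lessThan_Suc)

lemma on_path_Cons_Cons: "on_path (a # b # r) i j \<longleftrightarrow> {a, b} = {i, j} \<or> on_path (b # r) i j"
  unfolding on_path_def by (simp add: Ex_less_Suc2)

lemma on_path_commute: "on_path ps i j \<longleftrightarrow> on_path ps j i"
  unfolding on_path_def by (simp add: insert_commute)

lemma eq_if_adj_not_on_path: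
  assumes "adj E i j" "\<not> on_path ps i j"
    and "\<And>i j. (i, j) \<in> E \<Longrightarrow> \<not> on_path ps i j \<Longrightarrow> x i = x j"
  shows "x i = x j"
  using assms on_path_commute[of ps i j] unfolding adj_def by metis

lemma not_on_path_singleton [simp]: "\<not> on_path [a] i j"
  unfolding on_path_def by simp

lemma on_path_rev: "on_path (rev ps) i j \<longleftrightarrow> on_path ps i j"
proof -
  have *: "on_path (rev ps) i j" if on: "on_path ps i j" for ps :: "'a list"
  proof -
    obtain n where n: "Suc n < length ps" "{ps ! n, ps ! Suc n} = {i, j}"
      using on unfolding on_path_def by blast
    then have "rev ps ! (length ps - 2 - n) = ps ! Suc n" "rev ps ! Suc (length ps - 2 - n) = ps ! n"
      by (simp_all add: rev_nth Suc_diff_Suc numeral_2_eq_2)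
    with n show ?thesis
      unfolding on_path_def by (intro exI[of _ "length ps - 2 - n"]) auto
  qed
  show ?thesis
    using *[of ps] *[of "rev ps"] by auto
qed

lemma on_path_imp_in_set: "on_path ps i j \<Longrightarrow> i \<in> set ps \<and> j \<in> set ps"
  unfolding on_path_def by (auto simp: doubleton_eq_iff)

lemma base_gauge_remove_pendant:
  assumes tree: "is_tree V E" and v: "v \<in> V" and "pendant E v u"
  shows "base_gauge V E x = base_gauge (V - {v}) (remove_vertex_edges v E) x + max (x v - x u) 0"
proof -
  let ?E' = "remove_vertex_edges v E"
  let ?e = "stored_edge E v u"
  have fin: "finite V" and EV: "E \<subseteq> V \<times> V" and asym: "\<forall>i j. (i, j) \<in> E \<longrightarrow> (j, i) \<notin> E"
    using tree unfolding is_tree_def is_graph_def by auto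
  have "finite E"
    using EV fin by (meson finite_SigmaI finite_subset)
  have "E \<subseteq> insert ?e ?E'"
  proof
    fix e assume "e \<in> E"
    moreover obtain i j where "e = (i, j)" by (cases e)
    moreover have "j = u" if "i = v" "(i, j) \<in> E"
      using \<open>pendant E v u\<close> that unfolding pendant_def adj_def by blast
    moreover have "i = u" if "j = v" "(i, j) \<in> E"
      using \<open>pendant E v u\<close> that unfolding pendant_def adj_def by blast
    ultimately show "e \<in> insert ?e ?E'"
      using asym unfolding stored_edge_def remove_vertex_edges_def by auto
  qed
  moreover have "?e \<in> E" "?e \<notin> ?E'"
    using \<open>pendant E v u\<close> stored_edge_in[of E v u] unfolding stored_edge_def remove_vertex_edges_def pendant_def by auto
  moreover have "?E' \<subseteq> E"
    unfolding remove_vertex_edges_def by auto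
  ultimately have E: "E = insert ?e ?E'" and "finite ?E'"
    using \<open>finite E\<close> finite_subset by auto
  have "(\<Sum>(i, j)\<in>E. min (x i) (x j)) = min (x v) (x u) + (\<Sum>(i, j)\<in>?E'. min (x i) (x j))"
    by (subst E, subst sum.insert[OF \<open>finite ?E'\<close> \<open>?e \<notin> ?E'\<close>]) (simp add: stored_edge_def min.commute)
  moreover have "(\<Sum>w\<in>V. x w) = x v + (\<Sum>w\<in>V - {v}. x w)"
    using sum.remove[OF fin v] by simp
  ultimately show ?thesis
    unfolding base_gauge_def by (simp add: max_def min_def)
qed

lemma path_descent_le_base_gauge:
  assumes "is_tree V E" "path_in V E ps"
  shows "path_descent x ps \<le> base_gauge V E x"
  using assms
proof (induction V E arbitrary: ps rule: tree_pendant_induct)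
  case (singleton w)
  then show ?case
    using path_in_singleton by (fastforce simp: base_gauge_def)
next
  case (pendant V E v u)
  let ?V' = "V - {v}" and ?E' = "remove_vertex_edges v E"
  have base: "base_gauge V E x = base_gauge ?V' ?E' x + max (x v - x u) 0"
    using base_gauge_remove_pendant[OF pendant.hyps(1-3)] .
  have IH: "path_descent x qs \<le> base_gauge ?V' ?E' x" if "path_in V E qs" "v \<notin> set qs" for qs
    using path_in_remove_pendant[OF that] by (rule pendant.IH)
  have from_v: "path_descent x (v # u # r) \<le> base_gauge V E x" if "path_in V E (v # u # r)" for r
    using IH path_in_Cons_Cons[OF that] base by simp
  from pendant.prems pendant.hyps(3) show ?case
  proof (cases rule: pendant_path_cases)
    case avoid
    then show ?thesis
      using IH[OF pendant.prems] base by simp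
  next
    case single
    have "path_in V E [u]" "v \<notin> set [u]"
      using pendant_neighbour_mem[OF pendant.hyps(1,3)] by (auto simp: path_in_def)
    then show ?thesis
      using IH[of "[u]"] single base by (simp add: max_def)
  next
    case (head r)
    then show ?thesis
      using from_v pendant.prems by simp
  next
    case (tail r)
    then have "path_descent x (rev ps) \<le> base_gauge V E x"
      using from_v pendant.prems by (metis path_in_rev)
    then show ?thesis
      by (simp add: path_descent_rev)
  qed
qed

lemma base_gauge_eq_path_descent:
  assumes "is_tree V E" "path_in V E ps"
    and "\<And>i j. (i, j) \<in> E \<Longrightarrow> \<not> on_path ps i j \<Longrightarrow> x i = x j"
  shows "base_gauge V E x = path_descent x ps"
  using assms
proof (induction V E arbitrary: ps rule: tree_pendant_induct)
  case (singleton w)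
  then show ?case
    using path_in_singleton by (fastforce simp: base_gauge_def)
next
  case (pendant V E v u)
  let ?V' = "V - {v}" and ?E' = "remove_vertex_edges v E"
  have base: "base_gauge V E x = base_gauge ?V' ?E' x + max (x v - x u) 0"
    using base_gauge_remove_pendant[OF pendant.hyps(1-3)] .
  have IH: "base_gauge ?V' ?E' x = path_descent x qs"
    if "path_in V E qs" "v \<notin> set qs" "\<And>i j. (i, j) \<in> ?E' \<Longrightarrow> \<not> on_path qs i j \<Longrightarrow> x i = x j" for qs
    using pendant.IH[OF path_in_remove_pendant[OF that(1,2)]] that(3) by blast
  have v_eq_u: "x v = x u" if "\<not> on_path qs v u" "\<And>i j. (i, j) \<in> E \<Longrightarrow> \<not> on_path qs i j \<Longrightarrow> x i = x j" for qs
    using eq_if_adj_not_on_path[of E v u qs x] pendant.hyps(3) that unfolding pendant_def by blast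
  have from_v: "base_gauge V E x = path_descent x (v # u # r)"
    if "path_in V E (v # u # r)" and const: "\<And>i j. (i, j) \<in> E \<Longrightarrow> \<not> on_path (v # u # r) i j \<Longrightarrow> x i = x j"
    for r
  proof -
    have "x i = x j" if "(i, j) \<in> ?E'" "\<not> on_path (u # r) i j" for i j
      using that const by (auto simp: on_path_Cons_Cons doubleton_eq_iff remove_vertex_edges_def)
    then show ?thesis
      using IH[of "u # r"] path_in_Cons_Cons[OF \<open>path_in V E (v # u # r)\<close>] base by simp
  qed
  from pendant.prems(1) pendant.hyps(3) show ?case
  proof (cases rule: pendant_path_cases)
    case avoid
    then have "\<not> on_path ps v u"
      using on_path_imp_in_set[of ps v u] by blast
    then have "x v = x u"
      using pendant.prems(2) by (rule v_eq_u)
    moreover have "base_gauge ?V' ?E' x = path_descent x ps"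
      by (rule IH[OF pendant.prems(1) avoid]) (use pendant.prems(2) in \<open>simp add: remove_vertex_edges_def\<close>)
    ultimately show ?thesis
      using base by simp
  next
    case single
    have "path_in V E [u]" "v \<notin> set [u]"
      using pendant_neighbour_mem[OF pendant.hyps(1,3)] by (auto simp: path_in_def)
    moreover have "x v = x u"
      using v_eq_u[of ps] pendant.prems(2) single by simp
    moreover have "x i = x j" if "(i, j) \<in> ?E'" for i j
      using pendant.prems(2) single that unfolding remove_vertex_edges_def by auto
    ultimately show ?thesis
      using IH[of "[u]"] single base by simp
  next
    case (head r)
    then show ?thesis
      using from_v pendant.prems by simp
  next
    case (tail r)
    have "path_in V E (v # u # r)"
      using pendant.prems(1) path_in_rev[of V E ps] tail by simp
    moreover have "x i = x j" if "(i, j) \<in> E" "\<not> on_path (v # u # r) i j" for i j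
      using pendant.prems(2)[OF that(1)] that(2) on_path_rev[of ps i j] tail by simp
    ultimately have "base_gauge V E x = path_descent x (v # u # r)"
      by (rule from_v)
    then show ?thesis
      using tail path_descent_rev[of x ps] by simp
  qed
qed

section \<open>Edge penalties\<close>

definition edge_penalty :: "real \<Rightarrow> real \<Rightarrow> real \<Rightarrow> real \<Rightarrow> real" where
  "edge_penalty t g a b = (1 / t - 1) * max (a - b) 0 + (1 / g - 1) * max (b - a) 0"

lemma edge_penalty_nonneg: "0 < t \<Longrightarrow> t \<le> 1 \<Longrightarrow> 0 < g \<Longrightarrow> g \<le> 1 \<Longrightarrow> 0 \<le> edge_penalty t g a b"
  unfolding edge_penalty_def by (intro add_nonneg_nonneg mult_nonneg_nonneg) auto

lemma edge_penalty_same [simp]: "edge_penalty t g a a = 0"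
  unfolding edge_penalty_def by simp

lemma edge_gauge_conv_penalty: "edge_gauge t g a b - a - b = edge_penalty t g a b - min a b"
  unfolding edge_gauge_def edge_penalty_def
  by (cases "a \<le> b") (simp_all add: min_def max_def algebra_simps diff_divide_distrib)

lemma tree_gauge_conv_base_gauge:
  "tree_gauge V E \<theta> \<gamma> x = base_gauge V E x + (\<Sum>(i, j)\<in>E. edge_penalty (\<theta> (i, j)) (\<gamma> (i, j)) (x i) (x j))"
proof -
  have "(\<Sum>(i, j)\<in>E. edge_gauge (\<theta> (i, j)) (\<gamma> (i, j)) (x i) (x j) - x i - x j)
      = (\<Sum>(i, j)\<in>E. edge_penalty (\<theta> (i, j)) (\<gamma> (i, j)) (x i) (x j) - min (x i) (x j))"
    by (intro sum.cong) (auto simp: edge_gauge_conv_penalty)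
  then show ?thesis
    unfolding tree_gauge_def base_gauge_def by (simp add: case_prod_beta sum_subtractf)
qed

definition oriented_penalty ::
    "('v \<times> 'v) set \<Rightarrow> ('v \<times> 'v \<Rightarrow> real) \<Rightarrow> ('v \<times> 'v \<Rightarrow> real) \<Rightarrow> ('v \<Rightarrow> real) \<Rightarrow> 'v \<Rightarrow> 'v \<Rightarrow> real" where
  "oriented_penalty E \<theta> \<gamma> x i j = edge_penalty (theta_or E \<theta> \<gamma> i j) (gamma_or E \<theta> \<gamma> i j) (x i) (x j)"

lemma edge_penalty_stored_edge:
  "(case stored_edge E i j of (p, q) \<Rightarrow> edge_penalty (\<theta> (p, q)) (\<gamma> (p, q)) (x p) (x q))
    = oriented_penalty E \<theta> \<gamma> x i j"
  unfolding stored_edge_def oriented_penalty_def theta_or_def gamma_or_def edge_penalty_def by auto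

definition path_penalty ::
    "('v \<times> 'v) set \<Rightarrow> ('v \<times> 'v \<Rightarrow> real) \<Rightarrow> ('v \<times> 'v \<Rightarrow> real) \<Rightarrow> ('v \<Rightarrow> real) \<Rightarrow> 'v list \<Rightarrow> real" where
  "path_penalty E \<theta> \<gamma> x ps = (\<Sum>n<length ps - 1. oriented_penalty E \<theta> \<gamma> x (ps ! n) (ps ! Suc n))"

lemma path_penalty_singleton [simp]: "path_penalty E \<theta> \<gamma> x [a] = 0"
  unfolding path_penalty_def by simp

lemma path_penalty_Cons_Cons [simp]:
  "path_penalty E \<theta> \<gamma> x (a # b # r) = oriented_penalty E \<theta> \<gamma> x a b + path_penalty E \<theta> \<gamma> x (b # r)"
  unfolding path_penalty_def by (simp add: sum.lessThan_Suc_shift del: sum.lessThan_Suc)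

lemma path_penalty_le_sum_edge_penalty:
  assumes "finite E" and par: "\<forall>e\<in>E. 0 < \<theta> e \<and> \<theta> e \<le> 1 \<and> 0 < \<gamma> e \<and> \<gamma> e \<le> 1"
    and ps: "distinct ps" "successively (adj E) ps"
  shows "path_penalty E \<theta> \<gamma> x ps \<le> (\<Sum>(i, j)\<in>E. edge_penalty (\<theta> (i, j)) (\<gamma> (i, j)) (x i) (x j))"
proof -
  let ?I = "{..<length ps - 1}"
  let ?e = "\<lambda>n. stored_edge E (ps ! n) (ps ! Suc n)"
  let ?h = "\<lambda>(p, q). edge_penalty (\<theta> (p, q)) (\<gamma> (p, q)) (x p) (x q)"
  have "inj_on ?e ?I"
  proof
    fix n m assume "n \<in> ?I" "m \<in> ?I" "?e n = ?e m"
    moreover from this have "{ps ! n, ps ! Suc n} = {ps ! m, ps ! Suc m}"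
      unfolding stored_edge_def by (auto split: if_splits)
    ultimately show "n = m"
      using distinct_path_edge_eq_imp_eq[OF ps(1)] by auto
  qed
  moreover have "?e ` ?I \<subseteq> E"
  proof (rule image_subsetI)
    fix n assume "n \<in> ?I"
    then have "Suc n < length ps"
      by simp
    then show "?e n \<in> E"
      by (intro stored_edge_in successively_nth[OF ps(2)])
  qed
  ultimately have "(\<Sum>n\<in>?I. ?h (?e n)) \<le> (\<Sum>e\<in>E. ?h e)"
    using \<open>finite E\<close> par
    by (subst sum.reindex[OF \<open>inj_on ?e ?I\<close>, symmetric, unfolded o_def])
       (intro sum_mono2; auto intro!: edge_penalty_nonneg)
  then show ?thesis
    unfolding path_penalty_def edge_penalty_stored_edge by simp
qed

definition drop_cost :: "real \<Rightarrow> real \<Rightarrow> real \<Rightarrow> real" where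
  "drop_cost T G d = max d 0 / T + (1 / G - 1) * max (- d) 0"

lemma drop_cost_add_le:
  assumes "0 < T" "0 < G" "G \<le> 1"
  shows "drop_cost T G (d1 + d2) \<le> drop_cost T G d1 + drop_cost T G d2"
proof -
  have "max (d1 + d2) 0 / T \<le> max d1 0 / T + max d2 0 / T"
    using assms by (simp add: add_divide_distrib[symmetric] divide_right_mono)
  moreover have "(1 / G - 1) * max (- (d1 + d2)) 0 \<le> (1 / G - 1) * max (- d1) 0 + (1 / G - 1) * max (- d2) 0"
    using assms by (simp add: distrib_left[symmetric] mult_left_mono)
  ultimately show ?thesis
    unfolding drop_cost_def by linarith
qed

lemma drop_cost_le_edge_penalty:
  assumes "0 < t" "t \<le> T" "0 < g" "g \<le> G"
  shows "drop_cost T G (a - b) \<le> max (a - b) 0 + edge_penalty t g a b"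
proof -
  have "max (a - b) 0 / T \<le> max (a - b) 0 / t" "(1 / G - 1) * max (b - a) 0 \<le> (1 / g - 1) * max (b - a) 0"
    using assms by (auto intro!: divide_left_mono mult_right_mono frac_le)
  moreover have "max (a - b) 0 + (1 / t - 1) * max (a - b) 0 = max (a - b) 0 / t"
    by (simp add: algebra_simps)
  ultimately show ?thesis
    unfolding drop_cost_def edge_penalty_def by (simp add: max_def)
qed

lemma path_drop_cost_le:
  assumes "0 < T" "0 < G" "G \<le> 1" "ps \<noteq> []"
    and "successively (\<lambda>i j. 0 < theta_or E \<theta> \<gamma> i j \<and> theta_or E \<theta> \<gamma> i j \<le> T \<and>
             0 < gamma_or E \<theta> \<gamma> i j \<and> gamma_or E \<theta> \<gamma> i j \<le> G) ps"
  shows "x (last ps) + drop_cost T G (x (hd ps) - x (last ps))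
    \<le> path_descent x ps + path_penalty E \<theta> \<gamma> x ps"
  using assms(4,5)
proof (induction x ps rule: path_descent.induct)
  case (3 x a b r)
  have "drop_cost T G (x a - x (last (b # r)))
      \<le> drop_cost T G (x a - x b) + drop_cost T G (x b - x (last (b # r)))"
    using drop_cost_add_le[OF assms(1-3), of "x a - x b" "x b - x (last (b # r))"] by simp
  moreover have "drop_cost T G (x a - x b) \<le> max (x a - x b) 0 + oriented_penalty E \<theta> \<gamma> x a b"
    using "3.prems"(2) unfolding oriented_penalty_def by (intro drop_cost_le_edge_penalty) auto
  ultimately show ?case
    using "3.IH" "3.prems"(2) by simp
qed (simp_all add: drop_cost_def)

lemma drop_cost_conv_gauge:
  assumes "T \<noteq> 0" "G \<noteq> 0"
  shows "b + drop_cost T G (a - b) = a / T + b / G + (1 - 1 / T - 1 / G) * min a b"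
  using assms unfolding drop_cost_def
  by (cases "a \<le> b") (simp_all add: min_def max_def field_simps)

section \<open>The bivariate marginal gauge\<close>

lemma oriented_params:
  assumes "adj E i j" "\<forall>e\<in>E. P (\<theta> e) \<and> P (\<gamma> e)"
  shows "P (theta_or E \<theta> \<gamma> i j)" "P (gamma_or E \<theta> \<gamma> i j)"
  using assms unfolding theta_or_def gamma_or_def adj_def by auto

lemma tree_gauge_ge_drop_cost:
  assumes tree: "is_tree V E" and par: "\<forall>e\<in>E. 0 < \<theta> e \<and> \<theta> e \<le> 1 \<and> 0 < \<gamma> e \<and> \<gamma> e \<le> 1"
    and path: "simple_path E ps k l" "set ps \<subseteq> V"
    and "0 < T" "0 < G" "G \<le> 1"
    and max: "\<And>n. Suc n < length ps \<Longrightarrow>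
      theta_or E \<theta> \<gamma> (ps ! n) (ps ! Suc n) \<le> T \<and> gamma_or E \<theta> \<gamma> (ps ! n) (ps ! Suc n) \<le> G"
  shows "x l + drop_cost T G (x k - x l) \<le> tree_gauge V E \<theta> \<gamma> x"
proof -
  have ps: "ps \<noteq> []" "hd ps = k" "last ps = l" "successively (adj E) ps" "distinct ps"
    using path unfolding simple_path_def walk_iff_successively by auto
  then have path_in: "path_in V E ps"
    using path(2) unfolding path_in_def by simp
  have "finite E"
    using tree unfolding is_tree_def is_graph_def by (meson finite_SigmaI finite_subset)
  have bounds: "successively (\<lambda>i j. 0 < theta_or E \<theta> \<gamma> i j \<and> theta_or E \<theta> \<gamma> i j \<le> T \<and>
      0 < gamma_or E \<theta> \<gamma> i j \<and> gamma_or E \<theta> \<gamma> i j \<le> G) ps"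
  proof -
    have "\<forall>e\<in>E. 0 < \<theta> e \<and> 0 < \<gamma> e"
      using par by auto
    then show ?thesis
      unfolding successively_conv_nth
      using max oriented_params[OF successively_nth[OF ps(4)]] by auto
  qed
  have "x l + drop_cost T G (x k - x l) \<le> path_descent x ps + path_penalty E \<theta> \<gamma> x ps"
    using path_drop_cost_le[OF \<open>0 < T\<close> \<open>0 < G\<close> \<open>G \<le> 1\<close> ps(1) bounds, of x] ps(2,3) by simp
  also have "\<dots> \<le> base_gauge V E x + (\<Sum>(i, j)\<in>E. edge_penalty (\<theta> (i, j)) (\<gamma> (i, j)) (x i) (x j))"
    using path_descent_le_base_gauge[OF tree path_in]
      path_penalty_le_sum_edge_penalty[OF \<open>finite E\<close> par ps(5,4)] by (rule add_mono)
  finally show ?thesis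
    unfolding tree_gauge_conv_base_gauge .
qed

lemma path_descent_step_vector:
  assumes m: "Suc m < length ps"
    and x: "\<And>n. n < length ps \<Longrightarrow> x (ps ! n) = (if n \<le> m then a else b)"
  shows "path_descent x ps = b + max (a - b) 0"
proof -
  have "ps \<noteq> []"
    using m by auto
  have "(\<Sum>n<length ps - 1. max (x (ps ! n) - x (ps ! Suc n)) 0)
      = (\<Sum>n<length ps - 1. if n = m then max (a - b) 0 else 0)"
    using x by (intro sum.cong) auto
  moreover have "\<not> length ps - 1 \<le> m"
    using m by simp
  then have "x (last ps) = b"
    using x[of "length ps - 1"] \<open>ps \<noteq> []\<close> by (simp add: last_conv_nth)
  ultimately show ?thesis
    using path_descent_conv_sum[OF \<open>ps \<noteq> []\<close>, of x] m by (simp add: less_diff_conv)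
qed

lemma sum_edge_penalty_single_edge:
  assumes "finite E" "adj E p q" "\<And>i j. (i, j) \<in> E \<Longrightarrow> (j, i) \<notin> E"
    and const: "\<And>i j. (i, j) \<in> E \<Longrightarrow> {i, j} \<noteq> {p, q} \<Longrightarrow> x i = x j"
  shows "(\<Sum>(i, j)\<in>E. edge_penalty (\<theta> (i, j)) (\<gamma> (i, j)) (x i) (x j)) = oriented_penalty E \<theta> \<gamma> x p q"
proof -
  let ?e = "stored_edge E p q"
  let ?h = "\<lambda>(i, j). edge_penalty (\<theta> (i, j)) (\<gamma> (i, j)) (x i) (x j)"
  have "?e \<in> E"
    by (rule stored_edge_in[OF assms(2)])
  have "(\<Sum>e\<in>E. ?h e) = (\<Sum>e\<in>E. if e = ?e then ?h ?e else 0)"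
  proof (intro sum.cong refl)
    fix e assume "e \<in> E"
    moreover obtain i j where e: "e = (i, j)" by (cases e)
    ultimately have "x i = x j" if "e \<noteq> ?e"
      using const stored_edge_eq[OF _ assms(3)] that by metis
    then show "?h e = (if e = ?e then ?h ?e else 0)"
      using e by (cases "e = ?e") simp_all
  qed
  also have "\<dots> = ?h ?e"
    using \<open>?e \<in> E\<close> \<open>finite E\<close> by simp
  also have "\<dots> = oriented_penalty E \<theta> \<gamma> x p q"
    by (rule edge_penalty_stored_edge)
  finally show ?thesis .
qed

text \<open>The witness for the minimum: \<open>a\<close> on the side of \<open>k\<close> and \<open>b\<close> on the side of \<open>l\<close> of the
  \<open>m\<close>-th path edge, so that only this edge pays a penalty.\<close>
lemma tree_gauge_cut_vector:
  assumes tree: "is_tree V E" and path: "simple_path E ps k l" "set ps \<subseteq> V"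
    and m: "Suc m < length ps"
  obtains x where "x k = a" "x l = b" "\<forall>s. x s = a \<or> x s = b"
    and "tree_gauge V E \<theta> \<gamma> x = b + max (a - b) 0
      + edge_penalty (theta_or E \<theta> \<gamma> (ps ! m) (ps ! Suc m)) (gamma_or E \<theta> \<gamma> (ps ! m) (ps ! Suc m)) a b"
proof -
  have ps: "ps \<noteq> []" "hd ps = k" "last ps = l" "successively (adj E) ps" "distinct ps"
    using path unfolding simple_path_def walk_iff_successively by auto
  then have path_in: "path_in V E ps"
    using path(2) unfolding path_in_def by simp
  have "finite E" and asym: "\<And>i j. (i, j) \<in> E \<Longrightarrow> (j, i) \<notin> E"
    using tree unfolding is_tree_def is_graph_def by (auto intro: finite_subset)
  obtain A where A_prefix: "\<And>n. n \<le> m \<Longrightarrow> ps ! n \<in> A"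
    and A_suffix: "\<And>n. m < n \<Longrightarrow> n < length ps \<Longrightarrow> ps ! n \<notin> A"
    and A_cut: "\<And>i j. (i, j) \<in> E \<Longrightarrow> {i, j} \<noteq> {ps ! m, ps ! Suc m} \<Longrightarrow> i \<in> A \<longleftrightarrow> j \<in> A"
    using path_edge_cut[OF _ ps(5,4) m] tree unfolding is_tree_def by metis
  define x where "x w = (if w \<in> A then a else b)" for w
  have x_nth: "x (ps ! n) = (if n \<le> m then a else b)" if "n < length ps" for n
    using A_prefix A_suffix that unfolding x_def by auto
  have "x k = a" "x l = b"
    using x_nth[of 0] x_nth[of "length ps - 1"] m ps(1-3) by (auto simp: hd_conv_nth last_conv_nth)
  have x_cut: "x i = x j" if "(i, j) \<in> E" "{i, j} \<noteq> {ps ! m, ps ! Suc m}" for i j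
    using A_cut[OF that] unfolding x_def by simp
  have "x i = x j" if "(i, j) \<in> E" "\<not> on_path ps i j" for i j
    using x_cut[OF that(1)] that(2) m unfolding on_path_def by blast
  then have "base_gauge V E x = path_descent x ps"
    by (rule base_gauge_eq_path_descent[OF tree path_in])
  also have "\<dots> = b + max (a - b) 0"
    using m x_nth by (rule path_descent_step_vector)
  moreover have "(\<Sum>(i, j)\<in>E. edge_penalty (\<theta> (i, j)) (\<gamma> (i, j)) (x i) (x j))
      = edge_penalty (theta_or E \<theta> \<gamma> (ps ! m) (ps ! Suc m)) (gamma_or E \<theta> \<gamma> (ps ! m) (ps ! Suc m)) a b"
    using sum_edge_penalty_single_edge[where x = x and \<theta> = \<theta> and \<gamma> = \<gamma>,
        OF \<open>finite E\<close> successively_nth[OF ps(4) m] asym x_cut]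
      x_nth[of m] x_nth[of "Suc m"] m unfolding oriented_penalty_def by simp
  moreover have "\<forall>s. x s = a \<or> x s = b"
    unfolding x_def by simp
  ultimately show ?thesis
    using that \<open>x k = a\<close> \<open>x l = b\<close> unfolding tree_gauge_conv_base_gauge by simp
qed

lemma Max_over_path_edges:
  assumes "Suc 0 < length ps" "M = Max {f n | n. Suc n < length ps}"
  obtains m where "Suc m < length ps" "f m = M" "\<And>n. Suc n < length ps \<Longrightarrow> f n \<le> M"
proof -
  have S: "{f n | n. Suc n < length ps} = f ` {..<length ps - 1}"
    by auto
  have "0 \<in> {..<length ps - 1}"
    using assms(1) by simp
  then have "f ` {..<length ps - 1} \<noteq> {}"
    by blast
  then have "M \<in> f ` {..<length ps - 1}"
    unfolding assms(2) S by (intro Max_in) auto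
  then obtain m where "m < length ps - 1" "f m = M"
    by blast
  moreover have "f n \<le> M" if "Suc n < length ps" for n
    unfolding assms(2) S using that by (intro Max_ge) auto
  ultimately show ?thesis
    using that[of m] by simp
qed

lemma tree_gauge_attains_drop_cost:
  assumes tree: "is_tree V E" and path: "simple_path E ps k l" "set ps \<subseteq> V"
    and mT: "Suc mT < length ps" "theta_or E \<theta> \<gamma> (ps ! mT) (ps ! Suc mT) = T"
    and mG: "Suc mG < length ps" "gamma_or E \<theta> \<gamma> (ps ! mG) (ps ! Suc mG) = G"
  obtains x where "x k = a" "x l = b" "\<forall>s. x s = a \<or> x s = b"
    and "tree_gauge V E \<theta> \<gamma> x = b + drop_cost T G (a - b)"
proof (cases "b \<le> a")
  case True
  have "max (a - b) 0 + edge_penalty T g a b = drop_cost T G (a - b)" for g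
    using True unfolding edge_penalty_def drop_cost_def by (simp add: algebra_simps)
  then show ?thesis
    using tree_gauge_cut_vector[OF tree path mT(1)] that mT(2) by (metis add.assoc)
next
  case False
  have "max (a - b) 0 + edge_penalty t G a b = drop_cost T G (a - b)" for t
    using False unfolding edge_penalty_def drop_cost_def by simp
  then show ?thesis
    using tree_gauge_cut_vector[OF tree path mG(1)] that mG(2) by (metis add.assoc)
qed

lemma marginal2_tree_gauge_eq:
  assumes tree: "is_tree V E" and par: "\<forall>e\<in>E. 0 < \<theta> e \<and> \<theta> e \<le> 1 \<and> 0 < \<gamma> e \<and> \<gamma> e \<le> 1"
    and path: "simple_path E ps k l" "set ps \<subseteq> V"
    and "0 \<le> a" "0 \<le> b"
    and mT: "Suc mT < length ps" "theta_or E \<theta> \<gamma> (ps ! mT) (ps ! Suc mT) = T"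
    and mG: "Suc mG < length ps" "gamma_or E \<theta> \<gamma> (ps ! mG) (ps ! Suc mG) = G"
    and max: "\<And>n. Suc n < length ps \<Longrightarrow>
      theta_or E \<theta> \<gamma> (ps ! n) (ps ! Suc n) \<le> T \<and> gamma_or E \<theta> \<gamma> (ps ! n) (ps ! Suc n) \<le> G"
  shows "marginal2 V (tree_gauge V E \<theta> \<gamma>) k l a b = a / T + b / G + (1 - 1 / T - 1 / G) * min a b"
proof -
  have succ: "successively (adj E) ps"
    using path(1) unfolding simple_path_def walk_iff_successively by simp
  have par': "\<forall>e\<in>E. (0 < \<theta> e \<and> \<theta> e \<le> 1) \<and> (0 < \<gamma> e \<and> \<gamma> e \<le> 1)"
    using par by simp
  have "0 < T"
    using oriented_params(1)[OF successively_nth[OF succ mT(1)] par'] mT(2) by simp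
  have "0 < G" "G \<le> 1"
    using oriented_params(2)[OF successively_nth[OF succ mG(1)] par'] mG(2) by simp_all
  have lower: "b + drop_cost T G (a - b) \<le> tree_gauge V E \<theta> \<gamma> x" if "x k = a" "x l = b" for x
    using tree_gauge_ge_drop_cost[OF tree par path \<open>0 < T\<close> \<open>0 < G\<close> \<open>G \<le> 1\<close> max, of x] that by simp
  obtain x where "x k = a" "x l = b" "\<forall>s. x s = a \<or> x s = b"
    and "tree_gauge V E \<theta> \<gamma> x = b + drop_cost T G (a - b)"
    by (rule tree_gauge_attains_drop_cost[OF tree path mT mG])
  moreover from this(3) have "\<forall>s\<in>V. 0 \<le> x s"
    using \<open>0 \<le> a\<close> \<open>0 \<le> b\<close> by metis
  ultimately have "marginal2 V (tree_gauge V E \<theta> \<gamma>) k l a b = b + drop_cost T G (a - b)"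
    unfolding marginal2_def using lower by (intro cInf_eq_minimum) (auto intro!: exI[of _ x] simp: eq_commute)
  then show ?thesis
    using drop_cost_conv_gauge \<open>0 < T\<close> \<open>0 < G\<close> by simp
qed

theorem proposition9:
  fixes V :: "'v::linorder set" and E :: "('v \<times> 'v) set"
    and \<theta> \<gamma> :: "'v \<times> 'v \<Rightarrow> real"
  assumes tree: "is_tree V E"
    and par: "\<forall>e\<in>E. 0 < \<theta> e \<and> \<theta> e < 1 \<and> 0 < \<gamma> e \<and> \<gamma> e < 1"
    and kl: "k \<in> V" "l \<in> V" "k < l"
    and path: "simple_path E ps k l"
    and xs: "0 \<le> a" "0 \<le> b"
  shows "marginal2 V (tree_gauge V E \<theta> \<gamma>) k l a b =
    (let T = Max {theta_or E \<theta> \<gamma> (ps ! n) (ps ! Suc n) | n. Suc n < length ps};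
         G = Max {gamma_or E \<theta> \<gamma> (ps ! n) (ps ! Suc n) | n. Suc n < length ps}
     in a / T + b / G + (1 - 1 / T - 1 / G) * min a b)"
proof -
  define T where "T = Max {theta_or E \<theta> \<gamma> (ps ! n) (ps ! Suc n) | n. Suc n < length ps}"
  define G where "G = Max {gamma_or E \<theta> \<gamma> (ps ! n) (ps ! Suc n) | n. Suc n < length ps}"
  have walk: "walk E ps k l"
    using path unfolding simple_path_def by simp
  have "E \<subseteq> V \<times> V"
    using tree unfolding is_tree_def is_graph_def by blast
  then have "set ps \<subseteq> V"
    using kl(1) walk by (rule walk_subset_vertices)
  have len: "Suc 0 < length ps"
    using walk kl(3) unfolding walk_def by (cases ps rule: remdups_adj.cases) auto
  obtain mT where mT: "Suc mT < length ps" "theta_or E \<theta> \<gamma> (ps ! mT) (ps ! Suc mT) = T"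
    and T_max: "\<And>n. Suc n < length ps \<Longrightarrow> theta_or E \<theta> \<gamma> (ps ! n) (ps ! Suc n) \<le> T"
    using Max_over_path_edges[OF len T_def] by metis
  obtain mG where mG: "Suc mG < length ps" "gamma_or E \<theta> \<gamma> (ps ! mG) (ps ! Suc mG) = G"
    and G_max: "\<And>n. Suc n < length ps \<Longrightarrow> gamma_or E \<theta> \<gamma> (ps ! n) (ps ! Suc n) \<le> G"
    using Max_over_path_edges[OF len G_def] by metis
  have "\<forall>e\<in>E. 0 < \<theta> e \<and> \<theta> e \<le> 1 \<and> 0 < \<gamma> e \<and> \<gamma> e \<le> 1"
    using par by auto
  then show ?thesis
    using marginal2_tree_gauge_eq[OF tree _ path \<open>set ps \<subseteq> V\<close> xs mT mG] T_max G_max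
    unfolding T_def G_def Let_def by blast
qed

end
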